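(* Let $V_1,\dots,V_t$ be pairwise disjoint finite sets with $|V_i|\ge2$ for all $i$. For any integer $\ell\ge2$, the number of subsets $S\subseteq\bigcup_{i\in[t]}V_i$ with $|S|=\ell$ and $|S\cap V_i|\ne1$ for every $i\in[t]$ is at most $$\Big(\frac{20}{\ell}\big(|V_1|^2+\dots+|V_t|^2\big)\Big)^{\ell/2}.$$ *)

theory Defs
  imports Complex_Main
begin

end

theory Submission
  imports Defs "HOL-Library.Disjoint_Sets"
begin

(* Weight every admissible set S by x ^ card S. Splitting S along the blocks shows that the total
   weight is at most the product over the blocks of the weights of the subsets T of V i with
   card T \<noteq> 1, that is of (1 + x) ^ n - n x \<le> exp (n x) - n x \<le> exp ((n x) ^ 2) with n = card (V i).
   Hence the number of admissible l-sets is at most x ^ (-l) exp (x ^ 2 Q) with Q the sum of the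
   card (V i) ^ 2, and the choice x ^ 2 = l / (2 Q) gives (2 e Q / l) powr (l / 2). *)

lemma sum_power_card_Pow:
  fixes x :: "'b :: comm_semiring_1"
  assumes "finite A"
  shows "(\<Sum>T\<in>Pow A. x ^ card T) = (1 + x) ^ card A"
  using prod_add[OF assms, of "\<lambda>_. x" "\<lambda>_. 1"] by (simp add: add.commute)

lemma exp_minus_le_exp_square:
  fixes y :: real
  assumes "y \<ge> 0"
  shows "exp y - y \<le> exp (y ^ 2)"
proof (cases "y \<le> 1")
  case True
  have "exp y \<le> 1 + y + y ^ 2" using exp_bound[OF assms True] .
  moreover have "1 + y ^ 2 \<le> exp (y ^ 2)" using exp_ge_add_one_self[of "y ^ 2"] by simp
  ultimately show ?thesis by linarith
next
  case False
  then have "exp y \<le> exp (y ^ 2)" by (simp add: power2_eq_square)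
  then show ?thesis using assms by linarith
qed

lemma sum_power_card_non_singletons_le:
  fixes x :: real
  assumes "finite A" "x \<ge> 0"
  shows "(\<Sum>T | T \<subseteq> A \<and> card T \<noteq> 1. x ^ card T) \<le> exp ((x * card A) ^ 2)"
proof -
  let ?n = "real (card A)"
  have "(1 + x) ^ card A = (\<Sum>T\<in>Pow A. x ^ card T)"
    by (rule sum_power_card_Pow[OF assms(1), symmetric])
  also have "\<dots> = (\<Sum>T | T \<subseteq> A \<and> card T \<noteq> 1. x ^ card T) + (\<Sum>T | T \<subseteq> A \<and> card T = 1. x ^ card T)"
    by (subst sum.union_disjoint[symmetric]) (use assms(1) in \<open>auto intro: sum.cong\<close>)
  also have "(\<Sum>T | T \<subseteq> A \<and> card T = 1. x ^ card T) = ?n * x"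
    using n_subsets[OF assms(1), of 1] by simp
  finally have "(\<Sum>T | T \<subseteq> A \<and> card T \<noteq> 1. x ^ card T) = (1 + x) ^ card A - ?n * x"
    by simp
  also have "(1 + x) ^ card A \<le> exp x ^ card A"
    by (rule power_mono) (use assms in \<open>auto simp: exp_ge_add_one_self\<close>)
  also have "\<dots> = exp (?n * x)" by (simp add: exp_of_nat_mult)
  also have "exp (?n * x) - ?n * x \<le> exp ((?n * x) ^ 2)"
    using exp_minus_le_exp_square assms(2) by simp
  finally show ?thesis by (simp add: mult.commute)
qed

lemma sum_power_card_Un_image_le:
  fixes x :: real
  assumes "finite \<A>" "finite \<B>" "x \<ge> 0"
    and "\<And>A B. A \<in> \<A> \<Longrightarrow> B \<in> \<B> \<Longrightarrow> finite A \<and> finite B \<and> A \<inter> B = {}"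
  shows "(\<Sum>S\<in>(\<lambda>(A, B). A \<union> B) ` (\<A> \<times> \<B>). x ^ card S)
           \<le> (\<Sum>A\<in>\<A>. x ^ card A) * (\<Sum>B\<in>\<B>. x ^ card B)"
proof -
  have "(\<Sum>S\<in>(\<lambda>(A, B). A \<union> B) ` (\<A> \<times> \<B>). x ^ card S)
          \<le> (\<Sum>(A, B)\<in>\<A> \<times> \<B>. x ^ card (A \<union> B))"
    using sum_image_le[of "\<A> \<times> \<B>" "\<lambda>S. x ^ card S" "\<lambda>(A, B). A \<union> B"] assms(1-3)
    by (simp add: case_prod_unfold)
  also have "\<dots> = (\<Sum>(A, B)\<in>\<A> \<times> \<B>. x ^ card A * x ^ card B)"
    using assms(4) by (intro sum.cong) (auto simp: card_Un_disjoint power_add)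
  also have "\<dots> = (\<Sum>A\<in>\<A>. x ^ card A) * (\<Sum>B\<in>\<B>. x ^ card B)"
    by (simp add: sum_product sum.cartesian_product)
  finally show ?thesis .
qed

definition singleton_free_sets :: "('i \<Rightarrow> 'a set) \<Rightarrow> 'i set \<Rightarrow> 'a set set" where
  "singleton_free_sets V I = {S. S \<subseteq> (\<Union>i\<in>I. V i) \<and> (\<forall>i\<in>I. card (S \<inter> V i) \<noteq> 1)}"

lemma finite_singleton_free_sets:
  assumes "finite I" "\<And>i. i \<in> I \<Longrightarrow> finite (V i)"
  shows "finite (singleton_free_sets V I)"
  by (rule finite_subset[of _ "Pow (\<Union>i\<in>I. V i)"]) (use assms in \<open>auto simp: singleton_free_sets_def\<close>)

lemma singleton_free_sets_insert_subset:
  assumes "disjoint_family_on V (insert i I)" "i \<notin> I"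
  shows "singleton_free_sets V (insert i I)
           \<subseteq> (\<lambda>(A, B). A \<union> B) ` (singleton_free_sets V I \<times> {T. T \<subseteq> V i \<and> card T \<noteq> 1})"
proof
  fix S assume S: "S \<in> singleton_free_sets V (insert i I)"
  have "(S - V i) \<inter> V j = S \<inter> V j" if "j \<in> I" for j
    using assms that by (auto simp: disjoint_family_on_def)
  then have "S - V i \<in> singleton_free_sets V I"
    using S by (auto simp: singleton_free_sets_def)
  moreover have "S \<inter> V i \<in> {T. T \<subseteq> V i \<and> card T \<noteq> 1}"
    using S by (auto simp: singleton_free_sets_def)
  moreover have "S = (S - V i) \<union> (S \<inter> V i)" by blast
  ultimately show "S \<in> (\<lambda>(A, B). A \<union> B) ` (singleton_free_sets V I \<times> {T. T \<subseteq> V i \<and> card T \<noteq> 1})"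
    by (auto intro: image_eqI[of _ _ "(S - V i, S \<inter> V i)"])
qed

lemma sum_power_card_singleton_free_sets_le:
  fixes x :: real
  assumes "finite I" "\<And>i. i \<in> I \<Longrightarrow> finite (V i)" "disjoint_family_on V I" "x \<ge> 0"
  shows "(\<Sum>S\<in>singleton_free_sets V I. x ^ card S) \<le> exp (x ^ 2 * (\<Sum>i\<in>I. real (card (V i)) ^ 2))"
  using assms
proof (induction I rule: finite_induct)
  case empty
  then show ?case by (simp add: singleton_free_sets_def)
next
  case (insert i I)
  let ?\<A> = "singleton_free_sets V I" and ?\<B> = "{T. T \<subseteq> V i \<and> card T \<noteq> 1}"
  have fin: "finite ?\<A>" "finite ?\<B>"
    using insert.hyps(1) insert.prems(1) by (auto intro: finite_singleton_free_sets)
  have IH: "(\<Sum>A\<in>?\<A>. x ^ card A) \<le> exp (x ^ 2 * (\<Sum>j\<in>I. real (card (V j)) ^ 2))"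
    using insert.prems by (intro insert.IH) (auto intro: disjoint_family_on_mono[OF subset_insertI])
  have parts: "finite A \<and> finite B \<and> A \<inter> B = {}" if "A \<in> ?\<A>" "B \<in> ?\<B>" for A B
  proof -
    have sub: "A \<subseteq> (\<Union>j\<in>I. V j)" "B \<subseteq> V i"
      using that by (auto simp: singleton_free_sets_def)
    have "V j \<inter> V i = {}" if "j \<in> I" for j
      using insert.prems(2) insert.hyps(2) that by (auto simp: disjoint_family_on_def)
    then have "A \<inter> B = {}" using sub by blast
    moreover have "finite A" "finite B"
      using finite_subset[OF sub(1)] finite_subset[OF sub(2)] insert.hyps(1) insert.prems(1) by auto
    ultimately show ?thesis by blast
  qed
  have "(\<Sum>S\<in>singleton_free_sets V (insert i I). x ^ card S)
          \<le> (\<Sum>S\<in>(\<lambda>(A, B). A \<union> B) ` (?\<A> \<times> ?\<B>). x ^ card S)"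
    using singleton_free_sets_insert_subset[OF insert.prems(2) insert.hyps(2)] fin insert.prems(3)
    by (intro sum_mono2) auto
  also have "\<dots> \<le> (\<Sum>A\<in>?\<A>. x ^ card A) * (\<Sum>B\<in>?\<B>. x ^ card B)"
    by (rule sum_power_card_Un_image_le[OF fin insert.prems(3) parts])
  also have "\<dots> \<le> exp (x ^ 2 * (\<Sum>j\<in>I. real (card (V j)) ^ 2)) * exp ((x * card (V i)) ^ 2)"
    using insert.prems(1,3)
    by (intro mult_mono IH sum_power_card_non_singletons_le) (auto intro: sum_nonneg)
  also have "\<dots> = exp (x ^ 2 * (\<Sum>j\<in>insert i I. real (card (V j)) ^ 2))"
    using insert.hyps by (simp add: exp_add[symmetric] power_mult_distrib distrib_left)
  finally show ?case .
qed

lemma saddle_point_bound: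
  fixes N Q :: real and l :: nat
  assumes "Q > 0" "l > 0" and bound: "\<And>x. x > 0 \<Longrightarrow> N * x ^ l \<le> exp (x ^ 2 * Q)"
  shows "N \<le> (2 * exp 1 * Q / l) powr (l / 2)"
proof -
  define y where "y = l / (2 * Q)"
  have "y > 0" using assms(1,2) by (simp add: y_def)
  define x where "x = y powr (1 / 2)"
  have "x > 0" using \<open>y > 0\<close> by (simp add: x_def)
  have x_pow: "x ^ n = y powr (n / 2)" for n :: nat
    using \<open>y > 0\<close> by (simp add: x_def powr_powr flip: powr_realpow)
  have "exp (x ^ 2 * Q) = exp (l / 2)"
    using assms(1) by (simp add: x_pow y_def)
  also have "\<dots> = exp 1 powr (l / 2)"
    by (simp add: powr_def)
  finally have "N * y powr (l / 2) \<le> exp 1 powr (l / 2)"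
    using bound[OF \<open>x > 0\<close>] by (simp only: x_pow)
  then have "N \<le> exp 1 powr (l / 2) / y powr (l / 2)"
    using \<open>y > 0\<close> by (simp add: pos_le_divide_eq)
  also have "\<dots> = (exp 1 / y) powr (l / 2)"
    using \<open>y > 0\<close> by (simp add: powr_divide)
  also have "exp 1 / y = 2 * exp 1 * Q / l"
    using assms(1,2) by (simp add: y_def)
  finally show ?thesis .
qed

lemma card_singleton_free_sets_of_card_le:
  assumes "finite I" "\<And>i. i \<in> I \<Longrightarrow> finite (V i)" "disjoint_family_on V I" "l > 0"
  shows "real (card {S \<in> singleton_free_sets V I. card S = l})
           \<le> (2 * exp 1 * (\<Sum>i\<in>I. real (card (V i)) ^ 2) / l) powr (l / 2)"
proof -
  define Q where "Q = (\<Sum>i\<in>I. real (card (V i)) ^ 2)"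
  have fin: "finite (singleton_free_sets V I)"
    using assms(1,2) by (rule finite_singleton_free_sets)
  show ?thesis
  proof (cases "Q = 0")
    case True
    then have "V i = {}" if "i \<in> I" for i
      using assms(1,2) that by (simp add: Q_def sum_nonneg_eq_0_iff)
    then have "{S \<in> singleton_free_sets V I. card S = l} = {}"
      using assms(4) by (auto simp: singleton_free_sets_def)
    then show ?thesis by (simp only: card.empty of_nat_0 powr_ge_zero)
  next
    case False
    then have "Q > 0" by (simp add: Q_def order_neq_le_trans sum_nonneg)
    have "real (card {S \<in> singleton_free_sets V I. card S = l}) \<le> (2 * exp 1 * Q / l) powr (l / 2)"
    proof (rule saddle_point_bound[OF \<open>Q > 0\<close> assms(4)])
      fix x :: real assume "x > 0"
      have "real (card {S \<in> singleton_free_sets V I. card S = l}) * x ^ l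
              = (\<Sum>S | S \<in> singleton_free_sets V I \<and> card S = l. x ^ card S)"
        by simp
      also have "\<dots> \<le> (\<Sum>S\<in>singleton_free_sets V I. x ^ card S)"
        using fin \<open>x > 0\<close> by (intro sum_mono2) auto
      also have "\<dots> \<le> exp (x ^ 2 * Q)"
        unfolding Q_def using assms(1-3) \<open>x > 0\<close> by (intro sum_power_card_singleton_free_sets_le) auto
      finally show "real (card {S \<in> singleton_free_sets V I. card S = l}) * x ^ l \<le> exp (x ^ 2 * Q)" .
    qed
    then show ?thesis unfolding Q_def .
  qed
qed

theorem lemma6p4:
  fixes V :: "nat \<Rightarrow> 'a set" and t :: nat and l :: nat
  assumes fin: "\<And>i. i \<in> {1..t} \<Longrightarrow> finite (V i)"
    and card2: "\<And>i. i \<in> {1..t} \<Longrightarrow> card (V i) \<ge> 2"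
    and disj: "\<And>i j. i \<in> {1..t} \<Longrightarrow> j \<in> {1..t} \<Longrightarrow> i \<noteq> j \<Longrightarrow> V i \<inter> V j = {}"
    and l2: "l \<ge> 2"
  shows "real (card {S. S \<subseteq> (\<Union>i\<in>{1..t}. V i) \<and> card S = l \<and>
                       (\<forall>i\<in>{1..t}. card (S \<inter> V i) \<noteq> 1)})
         \<le> (20 / real l * (\<Sum>i=1..t. real (card (V i)) ^ 2)) powr (real l / 2)"
proof -
  let ?Q = "\<Sum>i=1..t. real (card (V i)) ^ 2"
  have family: "{S. S \<subseteq> (\<Union>i\<in>{1..t}. V i) \<and> card S = l \<and> (\<forall>i\<in>{1..t}. card (S \<inter> V i) \<noteq> 1)}
                  = {S \<in> singleton_free_sets V {1..t}. card S = l}"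
    by (auto simp: singleton_free_sets_def)
  have "disjoint_family_on V {1..t}"
    using disj by (auto simp: disjoint_family_on_def)
  then have "real (card {S \<in> singleton_free_sets V {1..t}. card S = l}) \<le> (2 * exp 1 * ?Q / l) powr (l / 2)"
    using fin l2 by (intro card_singleton_free_sets_of_card_le) auto
  also have "\<dots> \<le> (20 / l * ?Q) powr (l / 2)"
  proof (rule powr_mono2)
    have "2 * exp 1 * ?Q \<le> 20 * ?Q"
      using exp_le by (intro mult_right_mono) (auto intro: sum_nonneg)
    then show "2 * exp 1 * ?Q / l \<le> 20 / l * ?Q"
      by (simp add: divide_right_mono)
  qed (auto intro!: sum_nonneg divide_nonneg_nonneg mult_nonneg_nonneg)
  finally show ?thesis unfolding family .
qed

end
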